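(* Let $G$ be an edge-colored graph. The following are equivalent: (1) $G$ is PC acyclic of type 5; (2) the orientation procedure described below completes without a conflict and the resulting digraph is acyclic; (3) every vertex of $G$ is incident to edges of at most two colors, and every cycle $C$ in $G$ has a positive even number of $C$-monochromatic vertices.
   Context: An edge-colored graph is a finite undirected graph in which every edge is assigned a color. An ordering $v_1,\dots,v_n$ of $V(G)$ is of type 5 if for every $i\in[n]$, all edges from $v_i$ to $\{v_{i+1},\dots,v_n\}$ have the same color, all edges from $v_i$ to $\{v_1,\dots,v_{i-1}\}$ have the same color, and these two colors are different. $G$ is PC acyclic of type 5 if it has an ordering of its vertices of type 5. For a cycle $C$ in $G$, a vertex of $C$ is $C$-monochromatic if its two incident edges on $C$ have the same color. The orientation procedure: first check that each vertex is incident to edges of at most two colors (otherwise the procedure fails). Choose an arbitrary vertex $x$ (in each connected component) and orient the edges of one color incident to $x$ out of $x$ and the edges of the other color towards $x$. Then repeatedly, for every unmarked vertex $y$ that has an arc into it (respectively out of it) coming from an edge of color $i$, mark $y$ and orient all edges of color $i$ incident to $y$ towards $y$ (respectively out of $y$) and all other edges incident to $y$ out of $y$ (respectively towards $y$). The procedure stops with a conflict if orienting the edges incident to some $y$ causes some other vertex $z$ to (a) have two arcs of different colors oriented into it or two arcs of different colors oriented out of it, or (b) have an arc into it and an arc out of it of the same color. It completes if all edges are oriented without such a conflict. *)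

theory Defs
  imports Main
begin

definition ecgraph :: "'a set \<Rightarrow> 'a set set \<Rightarrow> bool" where
  "ecgraph V E \<longleftrightarrow> finite V \<and>
     (\<forall>e\<in>E. \<exists>u v. u \<noteq> v \<and> u \<in> V \<and> v \<in> V \<and> e = {u, v})"

definition colors_at :: "'a set set \<Rightarrow> ('a set \<Rightarrow> 'c) \<Rightarrow> 'a \<Rightarrow> 'c set" where
  "colors_at E col v = col ` {e \<in> E. v \<in> e}"

definition type5_ordering ::
  "'a set \<Rightarrow> 'a set set \<Rightarrow> ('a set \<Rightarrow> 'c) \<Rightarrow> 'a list \<Rightarrow> bool" where
  "type5_ordering V E col vs \<longleftrightarrow> distinct vs \<and> set vs = V \<and>
     (\<forall>i<length vs. \<forall>j<length vs. \<forall>k<length vs.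
        ((i < j \<and> i < k \<and> {vs!i, vs!j} \<in> E \<and> {vs!i, vs!k} \<in> E)
            \<longrightarrow> col {vs!i, vs!j} = col {vs!i, vs!k}) \<and>
        ((j < i \<and> k < i \<and> {vs!i, vs!j} \<in> E \<and> {vs!i, vs!k} \<in> E)
            \<longrightarrow> col {vs!i, vs!j} = col {vs!i, vs!k}) \<and>
        ((j < i \<and> i < k \<and> {vs!i, vs!j} \<in> E \<and> {vs!i, vs!k} \<in> E)
            \<longrightarrow> col {vs!i, vs!j} \<noteq> col {vs!i, vs!k}))"

definition pc_acyclic_type5 :: "'a set \<Rightarrow> 'a set set \<Rightarrow> ('a set \<Rightarrow> 'c) \<Rightarrow> bool" where
  "pc_acyclic_type5 V E col \<longleftrightarrow> (\<exists>vs. type5_ordering V E col vs)"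

definition is_cycle :: "'a set \<Rightarrow> 'a set set \<Rightarrow> 'a list \<Rightarrow> bool" where
  "is_cycle V E cs \<longleftrightarrow> length cs \<ge> 3 \<and> distinct cs \<and> set cs \<subseteq> V \<and>
     (\<forall>i<length cs. {cs!i, cs!((i + 1) mod length cs)} \<in> E)"

definition cycle_mono :: "('a set \<Rightarrow> 'c) \<Rightarrow> 'a list \<Rightarrow> nat \<Rightarrow> bool" where
  "cycle_mono col cs i \<longleftrightarrow>
     (let n = length cs in
       col {cs!((i + n - 1) mod n), cs!i} = col {cs!i, cs!((i + 1) mod n)})"

definition num_mono :: "('a set \<Rightarrow> 'c) \<Rightarrow> 'a list \<Rightarrow> nat" where
  "num_mono col cs = card {i. i < length cs \<and> cycle_mono col cs i}"

definition cond3 :: "'a set \<Rightarrow> 'a set set \<Rightarrow> ('a set \<Rightarrow> 'c) \<Rightarrow> bool" where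
  "cond3 V E col \<longleftrightarrow> (\<forall>v\<in>V. card (colors_at E col v) \<le> 2) \<and>
     (\<forall>cs. is_cycle V E cs \<longrightarrow> 0 < num_mono col cs \<and> even (num_mono col cs))"

text \<open>A state is (M, Arcs): the set of marked vertices and the set of arcs oriented so far.
orient_at E col y a out Arcs re-orients all edges at y: if out, edges of colour a leave y and
all other edges at y enter y; otherwise edges of colour a enter y and all others leave y.\<close>

definition orient_at ::
  "'a set set \<Rightarrow> ('a set \<Rightarrow> 'c) \<Rightarrow> 'a \<Rightarrow> 'c \<Rightarrow> bool \<Rightarrow> ('a \<times> 'a) set \<Rightarrow> ('a \<times> 'a) set" where
  "orient_at E col y a out Arcs =
     {(u, w) \<in> Arcs. u \<noteq> y \<and> w \<noteq> y}
     \<union> {(y, w) | w. {y, w} \<in> E \<and> (col {y, w} = a) = out}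
     \<union> {(w, y) | w. {y, w} \<in> E \<and> (col {y, w} = a) \<noteq> out}"

definition conflict :: "('a set \<Rightarrow> 'c) \<Rightarrow> ('a \<times> 'a) set \<Rightarrow> bool" where
  "conflict col Arcs \<longleftrightarrow> (\<exists>z u w.
      ((u, z) \<in> Arcs \<and> (w, z) \<in> Arcs \<and> col {u, z} \<noteq> col {w, z}) \<or>
      ((z, u) \<in> Arcs \<and> (z, w) \<in> Arcs \<and> col {z, u} \<noteq> col {z, w}) \<or>
      ((u, z) \<in> Arcs \<and> (z, w) \<in> Arcs \<and> col {u, z} = col {z, w}))"

definition adjrel :: "'a set set \<Rightarrow> ('a \<times> 'a) set" where
  "adjrel E = {(u, v). {u, v} \<in> E}"

text \<open>States reachable by (partial) runs of the procedure; steps are only taken from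
conflict-free states (the procedure stops at a conflict).\<close>

inductive orient_reach ::
  "'a set \<Rightarrow> 'a set set \<Rightarrow> ('a set \<Rightarrow> 'c) \<Rightarrow> 'a set \<times> ('a \<times> 'a) set \<Rightarrow> bool"
  for V E col where
  init: "orient_reach V E col ({}, {})"
| start: "\<lbrakk> orient_reach V E col (M, Arcs); \<not> conflict col Arcs; x \<in> V; x \<notin> M;
            \<forall>v. (x, v) \<in> (adjrel E)\<^sup>* \<longrightarrow> v \<notin> M;
            a \<in> colors_at E col x \<or> colors_at E col x = {} \<rbrakk>
         \<Longrightarrow> orient_reach V E col (insert x M, orient_at E col x a out Arcs)"
| prop_in: "\<lbrakk> orient_reach V E col (M, Arcs); \<not> conflict col Arcs; y \<in> V; y \<notin> M; (z, y) \<in> Arcs \<rbrakk>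
         \<Longrightarrow> orient_reach V E col (insert y M, orient_at E col y (col {z, y}) False Arcs)"
| prop_out: "\<lbrakk> orient_reach V E col (M, Arcs); \<not> conflict col Arcs; y \<in> V; y \<notin> M; (y, z) \<in> Arcs \<rbrakk>
         \<Longrightarrow> orient_reach V E col (insert y M, orient_at E col y (col {y, z}) True Arcs)"

definition all_oriented :: "'a set set \<Rightarrow> ('a \<times> 'a) set \<Rightarrow> bool" where
  "all_oriented E Arcs \<longleftrightarrow> (\<forall>e\<in>E. \<exists>u w. e = {u, w} \<and> (u, w) \<in> Arcs)"

text \<open>Condition (2), reading "arbitrary choices" existentially: some run of the procedure
passes the colour check and completes without conflict with an acyclic digraph.\<close>

definition proc_ok_some :: "'a set \<Rightarrow> 'a set set \<Rightarrow> ('a set \<Rightarrow> 'c) \<Rightarrow> bool" where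
  "proc_ok_some V E col \<longleftrightarrow> (\<forall>v\<in>V. card (colors_at E col v) \<le> 2) \<and>
     (\<exists>M Arcs. orient_reach V E col (M, Arcs) \<and> \<not> conflict col Arcs \<and> all_oriented E Arcs \<and> acyclic Arcs)"

text \<open>Condition (2), reading "arbitrary choices" universally: every run passes the colour
check, never reaches a conflict, and every completed run yields an acyclic digraph
(and a completed run exists).\<close>

definition proc_ok_all :: "'a set \<Rightarrow> 'a set set \<Rightarrow> ('a set \<Rightarrow> 'c) \<Rightarrow> bool" where
  "proc_ok_all V E col \<longleftrightarrow> (\<forall>v\<in>V. card (colors_at E col v) \<le> 2) \<and>
     (\<forall>M Arcs. orient_reach V E col (M, Arcs) \<longrightarrow> \<not> conflict col Arcs) \<and>
     (\<forall>M Arcs. orient_reach V E col (M, Arcs) \<and> all_oriented E Arcs \<longrightarrow> acyclic Arcs) \<and>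
     (\<exists>M Arcs. orient_reach V E col (M, Arcs) \<and> all_oriented E Arcs)"

end

theory Submission
  imports Defs "HOL-Library.Transitive_Closure_Table"
begin

text \<open>
  Call an orientation of G properly coloured if at every vertex all in-arcs have one colour and
  all out-arcs another. Type 5 orderings are exactly the topological orders of acyclic properly
  coloured orientations. Along a cycle such an orientation changes direction precisely at the
  C-monochromatic vertices, so their number is even, and it is zero only for directed cycles; this
  gives (1) \<Longrightarrow> (3), and shows that under (3) every properly coloured orientation is acyclic. Under (3)
  one exists: build it edge by edge, where an edge closing a cycle is oriented consistently because
  that cycle has evenly many monochromatic vertices, and an edge joining two components is handled by
  reversing one of them. Finally every run of the procedure stays inside a fixed properly coloured
  orientation with some components reversed, so it never conflicts, and it can always be continued
  until all vertices are marked.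
\<close>

section \<open>Properly coloured orientations\<close>

definition arcs_on :: "'a set set \<Rightarrow> ('a \<times> 'a) set \<Rightarrow> bool" where
  "arcs_on E A \<longleftrightarrow> (\<forall>x y. (x, y) \<in> A \<longrightarrow> {x, y} \<in> E)"

definition covers :: "'a set set \<Rightarrow> ('a \<times> 'a) set \<Rightarrow> bool" where
  "covers E A \<longleftrightarrow> (\<forall>x y. {x, y} \<in> E \<longrightarrow> (x, y) \<in> A \<or> (y, x) \<in> A)"

definition proper_at :: "('a set \<Rightarrow> 'c) \<Rightarrow> ('a \<times> 'a) set \<Rightarrow> 'a \<Rightarrow> bool" where
  "proper_at col A z \<longleftrightarrow> (\<forall>u w.
      ((u, z) \<in> A \<longrightarrow> (w, z) \<in> A \<longrightarrow> col {z, u} = col {z, w}) \<and>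
      ((z, u) \<in> A \<longrightarrow> (z, w) \<in> A \<longrightarrow> col {z, u} = col {z, w}) \<and>
      ((u, z) \<in> A \<longrightarrow> (z, w) \<in> A \<longrightarrow> col {z, u} \<noteq> col {z, w}))"

text \<open>
  The third clause of proper_at also forbids antiparallel arcs, so a pc_orientation orients
  every edge exactly once.
\<close>

definition pc_orientation :: "'a set set \<Rightarrow> ('a set \<Rightarrow> 'c) \<Rightarrow> ('a \<times> 'a) set \<Rightarrow> bool" where
  "pc_orientation E col A \<longleftrightarrow> arcs_on E A \<and> covers E A \<and> (\<forall>z. proper_at col A z)"

definition out_colour :: "('a set \<Rightarrow> 'c) \<Rightarrow> ('a \<times> 'a) set \<Rightarrow> 'a \<Rightarrow> 'c \<Rightarrow> bool" where
  "out_colour col A x c \<longleftrightarrow>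
     (\<forall>w. ((x, w) \<in> A \<longrightarrow> col {x, w} = c) \<and> ((w, x) \<in> A \<longrightarrow> col {x, w} \<noteq> c))"

definition in_colour :: "('a set \<Rightarrow> 'c) \<Rightarrow> ('a \<times> 'a) set \<Rightarrow> 'a \<Rightarrow> 'c \<Rightarrow> bool" where
  "in_colour col A x c \<longleftrightarrow> out_colour col (A\<inverse>) x c"

lemma conflict_iff_not_proper_at: "conflict col A \<longleftrightarrow> (\<exists>z. \<not> proper_at col A z)"
  unfolding conflict_def proper_at_def by (simp add: insert_commute)

lemma proper_atI:
  assumes "\<And>u w. (u, z) \<in> A \<Longrightarrow> (w, z) \<in> A \<Longrightarrow> col {z, u} = col {z, w}"
    and "\<And>u w. (z, u) \<in> A \<Longrightarrow> (z, w) \<in> A \<Longrightarrow> col {z, u} = col {z, w}"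
    and "\<And>u w. (u, z) \<in> A \<Longrightarrow> (z, w) \<in> A \<Longrightarrow> col {z, u} \<noteq> col {z, w}"
  shows "proper_at col A z"
  using assms unfolding proper_at_def by blast

lemma proper_atD:
  assumes "proper_at col A z"
  shows "(u, z) \<in> A \<Longrightarrow> (w, z) \<in> A \<Longrightarrow> col {z, u} = col {z, w}"
    and "(z, u) \<in> A \<Longrightarrow> (z, w) \<in> A \<Longrightarrow> col {z, u} = col {z, w}"
    and "(u, z) \<in> A \<Longrightarrow> (z, w) \<in> A \<Longrightarrow> col {z, u} \<noteq> col {z, w}"
  using assms unfolding proper_at_def by blast+

lemma proper_at_converse [simp]: "proper_at col (A\<inverse>) z \<longleftrightarrow> proper_at col A z"
proof -
  have "proper_at col (B\<inverse>) z" if "proper_at col B z" for B :: "('a \<times> 'a) set"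
  proof (rule proper_atI; unfold converse_iff)
    fix u w
    show "(z, u) \<in> B \<Longrightarrow> (z, w) \<in> B \<Longrightarrow> col {z, u} = col {z, w}" by (rule proper_atD(2)[OF that])
    show "(u, z) \<in> B \<Longrightarrow> (w, z) \<in> B \<Longrightarrow> col {z, u} = col {z, w}" by (rule proper_atD(1)[OF that])
    show "(z, u) \<in> B \<Longrightarrow> (w, z) \<in> B \<Longrightarrow> col {z, u} \<noteq> col {z, w}"
      using proper_atD(3)[OF that, of w u] by metis
  qed
  from this[of A] this[of "A\<inverse>"] show ?thesis by auto
qed

lemma proper_at_cong:
  assumes "\<And>w. (w, z) \<in> A \<longleftrightarrow> (w, z) \<in> B" and "\<And>w. (z, w) \<in> A \<longleftrightarrow> (z, w) \<in> B"
  shows "proper_at col A z \<longleftrightarrow> proper_at col B z"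
  unfolding proper_at_def assms ..

lemma out_colour_cong:
  assumes "\<And>w. (w, z) \<in> A \<longleftrightarrow> (w, z) \<in> B" and "\<And>w. (z, w) \<in> A \<longleftrightarrow> (z, w) \<in> B"
  shows "out_colour col A z c \<longleftrightarrow> out_colour col B z c"
  unfolding out_colour_def assms ..

lemma antiparallel_not_proper_at: "(x, w) \<in> A \<Longrightarrow> (w, x) \<in> A \<Longrightarrow> \<not> proper_at col A x"
  using proper_atD(3)[of col A x w w] by blast

lemma same_direction_iff_same_colour:
  assumes "proper_at col A x"
    and "(x, w) \<in> A \<or> (w, x) \<in> A" and "(x, w') \<in> A \<or> (w', x) \<in> A"
  shows "((x, w) \<in> A \<longleftrightarrow> (x, w') \<in> A) \<longleftrightarrow> col {x, w} = col {x, w'}"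
  using assms(2,3) proper_atD[OF assms(1)] by (elim disjE) metis+

lemma proper_at_insert_tail:
  assumes "proper_at col A u" and "out_colour col A u (col {u, v})" and "u \<noteq> v"
  shows "proper_at col (insert (u, v) A) u"
proof (rule proper_atI)
  fix a b
  have out: "(u, w) \<in> A \<Longrightarrow> col {u, w} = col {u, v}" "(w, u) \<in> A \<Longrightarrow> col {u, w} \<noteq> col {u, v}" for w
    using assms(2) unfolding out_colour_def by blast+
  note p = proper_atD[OF assms(1)]
  show "(a, u) \<in> insert (u, v) A \<Longrightarrow> (b, u) \<in> insert (u, v) A \<Longrightarrow> col {u, a} = col {u, b}"
    using p(1) assms(3) by blast
  show "(u, a) \<in> insert (u, v) A \<Longrightarrow> (u, b) \<in> insert (u, v) A \<Longrightarrow> col {u, a} = col {u, b}"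
    using out(1) by (metis insert_iff prod.inject)
  show "(a, u) \<in> insert (u, v) A \<Longrightarrow> (u, b) \<in> insert (u, v) A \<Longrightarrow> col {u, a} \<noteq> col {u, b}"
    using p(3) out(2) assms(3) by blast
qed

lemma proper_at_insert_head:
  assumes "proper_at col A v" and "in_colour col A v (col {u, v})" and "u \<noteq> v"
  shows "proper_at col (insert (u, v) A) v"
proof -
  have "proper_at col (insert (v, u) (A\<inverse>)) v"
    using proper_at_insert_tail[of col "A\<inverse>" v u] assms by (simp add: in_colour_def insert_commute)
  moreover have "insert (v, u) (A\<inverse>) = (insert (u, v) A)\<inverse>" by auto
  ultimately show ?thesis by simp
qed

lemma proper_at_insert_other:
  "z \<noteq> u \<Longrightarrow> z \<noteq> v \<Longrightarrow> proper_at col (insert (u, v) A) z \<longleftrightarrow> proper_at col A z"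
  by (rule proper_at_cong) auto

lemma pc_orientation_insert:
  assumes "pc_orientation F col A"
    and "out_colour col A u (col {u, v})" and "in_colour col A v (col {u, v})" and "u \<noteq> v"
  shows "pc_orientation (insert {u, v} F) col (insert (u, v) A)"
  unfolding pc_orientation_def
proof (intro conjI allI)
  show "arcs_on (insert {u, v} F) (insert (u, v) A)"
    using assms(1) unfolding pc_orientation_def arcs_on_def by auto
  show "covers (insert {u, v} F) (insert (u, v) A)"
    using assms(1) unfolding pc_orientation_def covers_def by (auto simp: doubleton_eq_iff)
  have A: "\<And>z. proper_at col A z"
    using assms(1) unfolding pc_orientation_def by blast
  fix z
  show "proper_at col (insert (u, v) A) z"
    using proper_at_insert_tail[OF A assms(2,4)] proper_at_insert_head[OF A assms(3,4)]
      proper_at_insert_other[of z u v col A] A by blast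
qed

lemma edge_at: "ecgraph V E \<Longrightarrow> e \<in> E \<Longrightarrow> x \<in> e \<Longrightarrow> \<exists>w. e = {x, w}"
  unfolding ecgraph_def by (metis insert_commute insert_iff singletonD)

lemma edge_endpoints: "ecgraph V E \<Longrightarrow> {x, y} \<in> E \<Longrightarrow> x \<noteq> y \<and> x \<in> V \<and> y \<in> V"
  unfolding ecgraph_def by (metis doubleton_eq_iff)

lemma colour_in_colors_at: "{x, w} \<in> E \<Longrightarrow> col {x, w} \<in> colors_at E col x"
  unfolding colors_at_def by blast

lemma out_or_in_colour:
  assumes "proper_at col A x" and "arcs_on E A" and "finite E"
    and "{x, v} \<in> E" and "card (colors_at E col x) \<le> 2"
  shows "out_colour col A x (col {x, v}) \<or> in_colour col A x (col {x, v})"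
proof (rule ccontr)
  define c where "c = col {x, v}"
  assume "\<not> (out_colour col A x (col {x, v}) \<or> in_colour col A x (col {x, v}))"
  then obtain w1 w2 where
    w1: "((x, w1) \<in> A \<and> col {x, w1} \<noteq> c) \<or> ((w1, x) \<in> A \<and> col {x, w1} = c)" and
    w2: "((w2, x) \<in> A \<and> col {x, w2} \<noteq> c) \<or> ((x, w2) \<in> A \<and> col {x, w2} = c)"
    unfolding in_colour_def out_colour_def c_def by auto
  note p = proper_atD[OF assms(1)]
  have arcs: "(x, w1) \<in> A" "(w2, x) \<in> A" and cols: "col {x, w1} \<noteq> c" "col {x, w2} \<noteq> c"
    using w1 w2 p(1)[of w1 w2] p(2)[of w1 w2] p(3)[of w1 w2] by auto
  have "col {x, w2} \<noteq> col {x, w1}"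
    using p(3)[OF arcs(2,1)] .
  moreover have "{x, w1} \<in> E" "{x, w2} \<in> E"
    using arcs assms(2) unfolding arcs_on_def by (metis insert_commute)+
  ultimately have "{c, col {x, w1}, col {x, w2}} \<subseteq> colors_at E col x"
    and "card {c, col {x, w1}, col {x, w2}} = 3"
    using cols colour_in_colors_at assms(4) unfolding c_def by auto
  moreover have "finite (colors_at E col x)"
    using assms(3) unfolding colors_at_def by simp
  ultimately have "3 \<le> card (colors_at E col x)"
    by (metis card_mono)
  then show False using assms(5) by simp
qed

lemma card_colors_at_le_2:
  assumes "ecgraph V E" and "covers E A" and "proper_at col A v"
  shows "card (colors_at E col v) \<le> 2"
proof -
  note p = proper_atD[OF assms(3)]
  obtain a where a: "\<And>w. (w, v) \<in> A \<Longrightarrow> col {v, w} = a"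
  proof (cases "\<exists>w. (w, v) \<in> A")
    case True
    then obtain w0 where "(w0, v) \<in> A" by blast
    then show ?thesis using that[of "col {v, w0}"] p(1) by blast
  qed blast
  obtain b where b: "\<And>w. (v, w) \<in> A \<Longrightarrow> col {v, w} = b"
  proof (cases "\<exists>w. (v, w) \<in> A")
    case True
    then obtain w0 where "(v, w0) \<in> A" by blast
    then show ?thesis using that[of "col {v, w0}"] p(2) by blast
  qed blast
  have "colors_at E col v \<subseteq> {a, b}"
  proof
    fix c assume "c \<in> colors_at E col v"
    then obtain w where "{v, w} \<in> E" "c = col {v, w}"
      unfolding colors_at_def using edge_at[OF assms(1)] by blast
    then show "c \<in> {a, b}"
      using assms(2) a b unfolding covers_def by blast
  qed
  then have "card (colors_at E col v) \<le> card {a, b}"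
    by (intro card_mono) auto
  also have "\<dots> \<le> 2"
    by (simp add: card_insert_le_m1)
  finally show ?thesis .
qed

text \<open>
  Arcs at vertices where \<sigma> fails are reversed; for \<sigma> constant on components this
  reverses whole components.
\<close>

definition flip :: "('a \<Rightarrow> bool) \<Rightarrow> ('a \<times> 'a) set \<Rightarrow> ('a \<times> 'a) set" where
  "flip \<sigma> A = {(x, y). if \<sigma> x then (x, y) \<in> A else (y, x) \<in> A}"

lemma flip_arcs_at:
  assumes "\<forall>x y. (x, y) \<in> A \<longrightarrow> \<sigma> x = \<sigma> y"
  shows "(w, z) \<in> flip \<sigma> A \<longleftrightarrow> (w, z) \<in> (if \<sigma> z then A else A\<inverse>)"
    and "(z, w) \<in> flip \<sigma> A \<longleftrightarrow> (z, w) \<in> (if \<sigma> z then A else A\<inverse>)"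
  using assms unfolding flip_def by auto

lemma proper_at_flip:
  assumes "\<forall>x y. (x, y) \<in> A \<longrightarrow> \<sigma> x = \<sigma> y"
  shows "proper_at col (flip \<sigma> A) z \<longleftrightarrow> proper_at col A z"
proof -
  have "proper_at col (flip \<sigma> A) z \<longleftrightarrow> proper_at col (if \<sigma> z then A else A\<inverse>) z"
    by (rule proper_at_cong) (rule flip_arcs_at[OF assms])+
  then show ?thesis by simp
qed

lemma out_colour_flip:
  assumes "\<forall>x y. (x, y) \<in> A \<longrightarrow> \<sigma> x = \<sigma> y"
  shows "out_colour col (flip \<sigma> A) z c \<longleftrightarrow> (if \<sigma> z then out_colour col A z c else in_colour col A z c)"
proof -
  have "out_colour col (flip \<sigma> A) z c \<longleftrightarrow> out_colour col (if \<sigma> z then A else A\<inverse>) z c"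
    by (rule out_colour_cong) (rule flip_arcs_at[OF assms])+
  then show ?thesis by (simp add: in_colour_def)
qed

lemma in_colour_flip:
  assumes "\<forall>x y. (x, y) \<in> A \<longrightarrow> \<sigma> x = \<sigma> y"
  shows "in_colour col (flip \<sigma> A) z c \<longleftrightarrow> (if \<sigma> z then in_colour col A z c else out_colour col A z c)"
proof -
  have "out_colour col ((flip \<sigma> A)\<inverse>) z c \<longleftrightarrow> out_colour col (if \<sigma> z then A\<inverse> else A) z c"
    by (rule out_colour_cong) (auto simp: flip_arcs_at(1)[OF assms, of _ z] flip_arcs_at(2)[OF assms, of z])
  then show ?thesis by (simp add: in_colour_def)
qed

lemma pc_orientation_flip:
  assumes "pc_orientation F col A" and "\<forall>x y. {x, y} \<in> F \<longrightarrow> \<sigma> x = \<sigma> y"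
  shows "pc_orientation F col (flip \<sigma> A)"
proof -
  have F: "arcs_on F A" "covers F A" "\<And>z. proper_at col A z"
    using assms(1) unfolding pc_orientation_def by blast+
  then have \<sigma>: "\<forall>x y. (x, y) \<in> A \<longrightarrow> \<sigma> x = \<sigma> y"
    using assms(2) unfolding arcs_on_def by blast
  have "(x, y) \<in> flip \<sigma> A \<Longrightarrow> (x, y) \<in> A \<or> (y, x) \<in> A" for x y
    unfolding flip_def by (auto split: if_splits)
  then have "arcs_on F (flip \<sigma> A)"
    using F(1) unfolding arcs_on_def by (metis insert_commute)
  moreover have "covers F (flip \<sigma> A)"
    using F(2) assms(2) unfolding covers_def flip_def by auto
  ultimately show ?thesis
    unfolding pc_orientation_def using F(3) proper_at_flip[OF \<sigma>] by blast
qed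

lemma pc_orientation_converse:
  assumes "pc_orientation F col A"
  shows "pc_orientation F col (A\<inverse>)"
  using assms unfolding pc_orientation_def arcs_on_def covers_def
  by (metis converse_iff insert_commute proper_at_converse)

lemma adjrel_iff [simp]: "(x, y) \<in> adjrel E \<longleftrightarrow> {x, y} \<in> E"
  unfolding adjrel_def by simp

lemma rtrancl_adjrel_edge:
  assumes "{x, y} \<in> E"
  shows "(a, x) \<in> (adjrel E)\<^sup>* \<longleftrightarrow> (a, y) \<in> (adjrel E)\<^sup>*"
  using assms rtrancl_into_rtrancl[of a x "adjrel E" y] rtrancl_into_rtrancl[of a y "adjrel E" x]
  by (auto simp: insert_commute)

section \<open>Type 5 orderings\<close>

definition pos :: "'a list \<Rightarrow> 'a \<Rightarrow> nat" where
  "pos vs x = (THE i. i < length vs \<and> vs ! i = x)" \<comment> \<open>junk for x \<notin> set vs\<close>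

lemma pos_nth [simp]: "distinct vs \<Longrightarrow> i < length vs \<Longrightarrow> pos vs (vs ! i) = i"
  unfolding pos_def by (rule the_equality) (auto simp: nth_eq_iff_index_eq)

lemma pos_in_set:
  assumes "distinct vs" and "x \<in> set vs"
  shows "pos vs x < length vs" and "vs ! pos vs x = x"
proof -
  obtain i where "i < length vs" "vs ! i = x"
    using assms(2) by (auto simp: in_set_conv_nth)
  then show "pos vs x < length vs" "vs ! pos vs x = x"
    using pos_nth[OF assms(1)] by auto
qed

lemma all_index_iff_all_elem:
  assumes "distinct vs"
  shows "(\<forall>i<length vs. P i) \<longleftrightarrow> (\<forall>x\<in>set vs. P (pos vs x))"
  by (metis assms nth_mem pos_in_set(1) pos_nth)

definition forward_arcs :: "'a set set \<Rightarrow> 'a list \<Rightarrow> ('a \<times> 'a) set" where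
  "forward_arcs E vs = {(x, y). {x, y} \<in> E \<and> pos vs x < pos vs y}"

lemma type5_ordering_iff_proper_forward_arcs:
  assumes "ecgraph V E" and "distinct vs" and "set vs = V"
  shows "type5_ordering V E col vs \<longleftrightarrow> (\<forall>z. proper_at col (forward_arcs E vs) z)"
proof -
  have arc: "(x, y) \<in> forward_arcs E vs \<longleftrightarrow>
      x \<in> V \<and> y \<in> V \<and> {y, x} \<in> E \<and> pos vs x < pos vs y" for x y
    using edge_endpoints[OF assms(1)] unfolding forward_arcs_def by (auto simp: insert_commute)
  have "type5_ordering V E col vs \<longleftrightarrow> (\<forall>z\<in>V. \<forall>u\<in>V. \<forall>w\<in>V.
       (pos vs z < pos vs u \<and> pos vs z < pos vs w \<and> {z, u} \<in> E \<and> {z, w} \<in> E \<longrightarrow> col {z, u} = col {z, w}) \<and>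
       (pos vs u < pos vs z \<and> pos vs w < pos vs z \<and> {z, u} \<in> E \<and> {z, w} \<in> E \<longrightarrow> col {z, u} = col {z, w}) \<and>
       (pos vs u < pos vs z \<and> pos vs z < pos vs w \<and> {z, u} \<in> E \<and> {z, w} \<in> E \<longrightarrow> col {z, u} \<noteq> col {z, w}))"
    unfolding type5_ordering_def all_index_iff_all_elem[OF assms(2)]
    using assms(2,3) pos_in_set[OF assms(2)] by simp
  also have "\<dots> \<longleftrightarrow> (\<forall>z. proper_at col (forward_arcs E vs) z)"
    unfolding proper_at_def arc by (auto simp: insert_commute)
  finally show ?thesis .
qed

lemma forward_arcs_acyclic: "acyclic (forward_arcs E vs)"
proof (rule acyclic_subset)
  show "acyclic (inv_image less_than (pos vs))"
    by (rule wf_acyclic) (rule wf_inv_image[OF wf_less_than])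
  show "forward_arcs E vs \<subseteq> inv_image less_than (pos vs)"
    unfolding forward_arcs_def by auto
qed

lemma forward_arcs_covers:
  assumes "ecgraph V E" and "distinct vs" and "set vs = V"
  shows "covers E (forward_arcs E vs)"
  unfolding covers_def forward_arcs_def
proof (intro allI impI)
  fix x y assume e: "{x, y} \<in> E"
  have "pos vs x \<noteq> pos vs y"
  proof
    assume "pos vs x = pos vs y"
    then have "vs ! pos vs x = vs ! pos vs y" by simp
    then show False
      using edge_endpoints[OF assms(1) e] pos_in_set(2)[OF assms(2)] assms(3) by simp
  qed
  then show "(x, y) \<in> {(x, y). {x, y} \<in> E \<and> pos vs x < pos vs y} \<or>
             (y, x) \<in> {(x, y). {x, y} \<in> E \<and> pos vs x < pos vs y}"
    using e by (auto simp: insert_commute)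
qed

lemma topological_order:
  assumes "finite S" and "acyclic A"
  shows "\<exists>vs. distinct vs \<and> set vs = S \<and> (\<forall>i j. i < j \<longrightarrow> j < length vs \<longrightarrow> (vs ! j, vs ! i) \<notin> A)"
  using assms(1)
proof (induction S rule: finite_remove_induct)
  case empty
  show ?case by simp
next
  case (remove S)
  have "finite (A \<inter> S \<times> S)"
    using remove.hyps(1) by simp
  moreover have "acyclic (A \<inter> S \<times> S)"
    using assms(2) by (rule acyclic_subset) blast
  ultimately have wf: "wf (A \<inter> S \<times> S)"
    by (rule finite_acyclic_wf)
  obtain x0 where "x0 \<in> S"
    using remove.hyps(2) by blast
  then obtain z where z: "z \<in> S" and "\<And>y. (y, z) \<in> A \<inter> S \<times> S \<Longrightarrow> y \<notin> S"
    using wfE_min[OF wf] by blast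
  then have min: "\<And>y. y \<in> S \<Longrightarrow> (y, z) \<notin> A"
    by blast
  obtain vs where vs: "distinct vs" "set vs = S - {z}"
    and sorted: "\<forall>i j. i < j \<longrightarrow> j < length vs \<longrightarrow> (vs ! j, vs ! i) \<notin> A"
    using remove.IH[OF z] by blast
  have into_z: "(vs ! j, z) \<notin> A" if "j < length vs" for j
    using min nth_mem[OF that] vs(2) by blast
  have "((z # vs) ! j, (z # vs) ! i) \<notin> A" if ij: "i < j" "j < length (z # vs)" for i j
  proof -
    obtain j' where j': "j = Suc j'" "j' < length vs"
      using ij by (cases j) auto
    show ?thesis
    proof (cases i)
      case 0
      then show ?thesis using j' into_z by simp
    next
      case (Suc i')
      then show ?thesis using j' ij(1) sorted by simp
    qed
  qed
  then show ?case
    using vs z by (intro exI[of _ "z # vs"]) auto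
qed

lemma eq_forward_arcs_of_topological_order:
  assumes "ecgraph V E" and A: "pc_orientation E col A"
    and vs: "distinct vs" "set vs = V"
    and sorted: "\<forall>i j. i < j \<longrightarrow> j < length vs \<longrightarrow> (vs ! j, vs ! i) \<notin> A"
  shows "A = forward_arcs E vs"
proof -
  have forward: "pos vs x < pos vs y" if "(x, y) \<in> A" for x y
  proof -
    have xy: "x \<in> V" "y \<in> V" "x \<noteq> y"
      using A that edge_endpoints[OF assms(1)] unfolding pc_orientation_def arcs_on_def by blast+
    have "pos vs x \<noteq> pos vs y"
    proof
      assume "pos vs x = pos vs y"
      then have "vs ! pos vs x = vs ! pos vs y" by simp
      then show False
        using xy pos_in_set(2)[OF vs(1)] vs(2) by simp
    qed
    moreover have "\<not> pos vs y < pos vs x"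
    proof
      assume "pos vs y < pos vs x"
      then have "(vs ! pos vs x, vs ! pos vs y) \<notin> A"
        using sorted pos_in_set(1)[OF vs(1)] xy vs(2) by blast
      then show False
        using that pos_in_set(2)[OF vs(1)] xy vs(2) by simp
    qed
    ultimately show ?thesis by simp
  qed
  show ?thesis
  proof (intro set_eqI iffI)
    fix p assume "p \<in> A"
    then show "p \<in> forward_arcs E vs"
      using A forward unfolding pc_orientation_def arcs_on_def forward_arcs_def by auto
  next
    fix p assume "p \<in> forward_arcs E vs"
    then show "p \<in> A"
      using A forward unfolding pc_orientation_def covers_def forward_arcs_def by fastforce
  qed
qed

lemma pc_acyclic_type5_iff_acyclic_pc_orientation:
  assumes "ecgraph V E"
  shows "pc_acyclic_type5 V E col \<longleftrightarrow> (\<exists>A. pc_orientation E col A \<and> acyclic A)"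
proof
  assume "pc_acyclic_type5 V E col"
  then obtain vs where vs: "type5_ordering V E col vs"
    unfolding pc_acyclic_type5_def by blast
  then have "distinct vs" "set vs = V"
    unfolding type5_ordering_def by blast+
  then have "pc_orientation E col (forward_arcs E vs)"
    using vs type5_ordering_iff_proper_forward_arcs[OF assms] forward_arcs_covers[OF assms]
    unfolding pc_orientation_def arcs_on_def forward_arcs_def by blast
  then show "\<exists>A. pc_orientation E col A \<and> acyclic A"
    using forward_arcs_acyclic by blast
next
  assume "\<exists>A. pc_orientation E col A \<and> acyclic A"
  then obtain A where A: "pc_orientation E col A" "acyclic A" by blast
  obtain vs where vs: "distinct vs" "set vs = V"
    and "\<forall>i j. i < j \<longrightarrow> j < length vs \<longrightarrow> (vs ! j, vs ! i) \<notin> A"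
    using topological_order[OF _ A(2)] assms unfolding ecgraph_def by blast
  then have "A = forward_arcs E vs"
    by (rule eq_forward_arcs_of_topological_order[OF assms A(1)])
  then have "type5_ordering V E col vs"
    using A(1) type5_ordering_iff_proper_forward_arcs[OF assms vs] unfolding pc_orientation_def by blast
  then show "pc_acyclic_type5 V E col"
    unfolding pc_acyclic_type5_def by blast
qed

section \<open>Cycles and monochromatic vertices\<close>

lemma cyclic_prev:
  fixes i n :: nat
  assumes "i < n"
  shows "(i + n - 1) mod n = (if i = 0 then n - 1 else i - 1)"
proof (cases "i = 0")
  case False
  then have "i + n - 1 = i - 1 + n" by simp
  then have "(i + n - 1) mod n = (i - 1 + n) mod n" by (simp only:)
  also have "\<dots> = i - 1" using assms by simp
  finally show ?thesis using False by simp
qed (use assms in simp)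

lemma cyclic_next_prev: "i < (n :: nat) \<Longrightarrow> ((i + n - 1) mod n + 1) mod n = i"
  using cyclic_prev[of i n] by (cases "i = 0") auto

lemma even_card_cyclic_changes:
  fixes g :: "nat \<Rightarrow> bool"
  shows "even (card {i. i < n \<and> g ((i + n - 1) mod n) \<noteq> g i})"
proof -
  define prev where "prev i = (i + n - 1) mod n" for i :: nat
  have "inj_on prev {..<n}"
    by (rule inj_onI) (metis prev_def cyclic_next_prev lessThan_iff)
  moreover have "prev ` {..<n} \<subseteq> {..<n}"
    unfolding prev_def by auto
  ultimately have "bij_betw prev {..<n} {..<n}"
    by (simp add: bij_betw_def endo_inj_surj)
  then have shift: "(\<Sum>i<n. of_bool (g (prev i)) :: int) = (\<Sum>i<n. of_bool (g i))"
    by (rule sum.reindex_bij_betw)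
  \<comment> \<open>A change at i counts g(prev i) + g(i) - 2 g(prev i) g(i); the two linear sums cancel mod 2.\<close>
  have "int (card {i. i < n \<and> g (prev i) \<noteq> g i}) = (\<Sum>i<n. of_bool (g (prev i) \<noteq> g i))"
    by (simp add: lessThan_def Collect_conj_eq[symmetric])
  also have "\<dots> = (\<Sum>i<n. of_bool (g (prev i)) + of_bool (g i) - 2 * (of_bool (g (prev i)) * of_bool (g i)))"
    by (rule sum.cong) auto
  also have "\<dots> = (\<Sum>i<n. of_bool (g (prev i))) + (\<Sum>i<n. of_bool (g i))
      - 2 * (\<Sum>i<n. of_bool (g (prev i)) * of_bool (g i))"
    by (simp only: sum.distrib sum_subtractf sum_distrib_left)
  finally have "int (card {i. i < n \<and> g (prev i) \<noteq> g i})
      = 2 * ((\<Sum>i<n. of_bool (g i)) - (\<Sum>i<n. of_bool (g (prev i)) * of_bool (g i)))"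
    unfolding shift by simp
  then show ?thesis
    unfolding prev_def by presburger
qed

definition forward_step :: "('a \<times> 'a) set \<Rightarrow> 'a list \<Rightarrow> nat \<Rightarrow> bool" where
  "forward_step A cs i \<longleftrightarrow> (cs ! i, cs ! ((i + 1) mod length cs)) \<in> A"

definition turn :: "('a \<times> 'a) set \<Rightarrow> 'a list \<Rightarrow> nat \<Rightarrow> bool" where
  "turn A cs i \<longleftrightarrow> forward_step A cs ((i + length cs - 1) mod length cs) \<noteq> forward_step A cs i"

lemma even_card_turns: "even (card {i. i < length cs \<and> turn A cs i})"
  unfolding turn_def by (rule even_card_cyclic_changes)

lemma cycle_mono_iff_turn:
  assumes "is_cycle V F cs" and "covers F A" and "i < length cs" and "proper_at col A (cs ! i)"
  shows "cycle_mono col cs i \<longleftrightarrow> turn A cs i"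
proof -
  let ?n = "length cs"
  define p where "p = (i + ?n - 1) mod ?n"
  define q where "q = (i + 1) mod ?n"
  have "0 < ?n"
    using assms(3) by linarith
  then have p: "p < ?n" "(p + 1) mod ?n = i"
    using cyclic_next_prev[OF assms(3)] unfolding p_def by auto
  have "{cs ! p, cs ! i} \<in> F" "{cs ! i, cs ! q} \<in> F"
    using assms(1,3) p unfolding is_cycle_def q_def by metis+
  then have arcs: "(cs ! i, cs ! p) \<in> A \<or> (cs ! p, cs ! i) \<in> A" "(cs ! i, cs ! q) \<in> A \<or> (cs ! q, cs ! i) \<in> A"
    using assms(2) unfolding covers_def by (metis insert_commute)+
  have "(cs ! p, cs ! i) \<in> A \<longleftrightarrow> (cs ! i, cs ! p) \<notin> A"
    using arcs(1) antiparallel_not_proper_at[of "cs ! i" "cs ! p" A col] assms(4) by blast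
  then show ?thesis
    using same_direction_iff_same_colour[OF assms(4) arcs] p(2)
    unfolding cycle_mono_def turn_def forward_step_def Let_def p_def[symmetric] q_def[symmetric]
    by (auto simp: insert_commute)
qed

lemma cycle_mono_iff_turn_by_parity:
  assumes "\<And>i. i < length cs \<Longrightarrow> i \<noteq> k \<Longrightarrow> cycle_mono col cs i \<longleftrightarrow> turn A cs i"
    and "k < length cs" and "even (num_mono col cs)"
  shows "cycle_mono col cs k \<longleftrightarrow> turn A cs k"
proof (rule ccontr)
  define M where "M = {i. i < length cs \<and> cycle_mono col cs i}"
  define T where "T = {i. i < length cs \<and> turn A cs i}"
  assume "\<not> (cycle_mono col cs k \<longleftrightarrow> turn A cs k)"
  then have "M = insert k T \<and> k \<notin> T \<or> T = insert k M \<and> k \<notin> M"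
    using assms(1,2) unfolding M_def T_def by auto
  moreover have "finite M" "finite T"
    unfolding M_def T_def by auto
  ultimately have "odd (card M + card T)"
    by auto
  moreover have "even (card M)" "even (card T)"
    using assms(3) even_card_turns unfolding M_def T_def num_mono_def by auto
  ultimately show False by simp
qed

lemma closed_walk_in_trancl:
  assumes "0 < length cs" and "\<forall>i<length cs. (cs ! i, cs ! ((i + 1) mod length cs)) \<in> R"
  shows "(cs ! 0, cs ! 0) \<in> R\<^sup>+"
proof -
  let ?n = "length cs"
  have step: "(cs ! (j mod ?n), cs ! (Suc j mod ?n)) \<in> R" for j
    using assms(2)[rule_format, of "j mod ?n"] assms(1) by (simp add: mod_Suc_eq)
  have "(cs ! 0, cs ! (Suc j mod ?n)) \<in> R\<^sup>+" for j
  proof (induction j)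
    case 0
    then show ?case using step[of 0] by simp
  next
    case (Suc j)
    then show ?case using step[of "Suc j"] by (rule trancl_into_trancl)
  qed
  from this[of "?n - 1"] show ?thesis
    using assms(1) by simp
qed

lemma no_turn_constant_direction:
  assumes "\<forall>i<length cs. \<not> turn A cs i"
  shows "\<forall>i<length cs. forward_step A cs i \<longleftrightarrow> forward_step A cs 0"
proof (intro allI impI)
  fix i assume "i < length cs"
  then show "forward_step A cs i \<longleftrightarrow> forward_step A cs 0"
  proof (induction i)
    case (Suc i)
    have "(Suc i + length cs - 1) mod length cs = i"
      using cyclic_prev[OF Suc.prems] by simp
    then show ?case
      using assms Suc unfolding turn_def by auto
  qed simp
qed

lemma acyclic_cycle_has_turn:
  assumes "is_cycle V E cs" and "covers E A" and "acyclic A"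
  shows "\<exists>i<length cs. turn A cs i"
proof (rule ccontr)
  let ?n = "length cs"
  assume "\<not> (\<exists>i<?n. turn A cs i)"
  then have const: "\<forall>i<?n. forward_step A cs i \<longleftrightarrow> forward_step A cs 0"
    by (intro no_turn_constant_direction) blast
  have "3 \<le> ?n"
    using assms(1) unfolding is_cycle_def by blast
  then have n: "0 < ?n" by linarith
  have "\<forall>i<?n. (cs ! i, cs ! ((i + 1) mod ?n)) \<in> A \<or> (cs ! i, cs ! ((i + 1) mod ?n)) \<in> A\<inverse>"
    using assms(1,2) unfolding is_cycle_def covers_def by auto
  then consider "\<forall>i<?n. (cs ! i, cs ! ((i + 1) mod ?n)) \<in> A"
    | "\<forall>i<?n. (cs ! i, cs ! ((i + 1) mod ?n)) \<in> A\<inverse>"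
    using const unfolding forward_step_def by blast
  then show False
  proof cases
    case 1
    then show False
      using closed_walk_in_trancl[OF n] assms(3) unfolding acyclic_def by blast
  next
    case 2
    moreover have "acyclic (A\<inverse>)"
      using assms(3) by simp
    ultimately show False
      using closed_walk_in_trancl[OF n] unfolding acyclic_def by blast
  qed
qed

lemma cond3_of_acyclic_pc_orientation:
  assumes "ecgraph V E" and "pc_orientation E col A" and "acyclic A"
  shows "cond3 V E col"
proof -
  have A: "covers E A" "\<And>z. proper_at col A z"
    using assms(2) unfolding pc_orientation_def by blast+
  show ?thesis
    unfolding cond3_def
  proof (intro conjI ballI allI impI)
    fix v
    show "card (colors_at E col v) \<le> 2"
      by (rule card_colors_at_le_2[OF assms(1) A])
  next
    fix cs assume cs: "is_cycle V E cs"
    have "num_mono col cs = card {i. i < length cs \<and> turn A cs i}"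
      unfolding num_mono_def using cycle_mono_iff_turn[OF cs A(1) _ A(2)] by metis
    moreover have "0 < card {i. i < length cs \<and> turn A cs i}"
      using acyclic_cycle_has_turn[OF cs A(1) assms(3)] by (simp add: card_gt_0_iff)
    ultimately show "0 < num_mono col cs" "even (num_mono col cs)"
      using even_card_turns[of cs A] by simp_all
  qed
qed

lemma rtrancl_path_nth:
  assumes "rtrancl_path r x xs y"
  shows "\<forall>i<length xs. r ((x # xs) ! i) (xs ! i)" and "last (x # xs) = y"
  using assms by (induction, auto simp: less_Suc_eq_0_disj)+

lemma distinct_path:
  assumes "(a, b) \<in> R\<^sup>*"
  obtains ps where "distinct ps" and "ps \<noteq> []" and "hd ps = a" and "last ps = b"
    and "\<And>i. Suc i < length ps \<Longrightarrow> (ps ! i, ps ! Suc i) \<in> R"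
proof -
  have "(\<lambda>x y. (x, y) \<in> R)\<^sup>*\<^sup>* a b"
    using assms by (simp add: rtranclp_rtrancl_eq)
  then obtain xs where "rtrancl_path (\<lambda>x y. (x, y) \<in> R) a xs b"
    using rtranclp_eq_rtrancl_path by metis
  then obtain xs' where path: "rtrancl_path (\<lambda>x y. (x, y) \<in> R) a xs' b" and "distinct (a # xs')"
    using rtrancl_path_distinct by metis
  show ?thesis
  proof (rule that[of "a # xs'"])
    show "last (a # xs') = b"
      by (rule rtrancl_path_nth(2)[OF path])
    show "((a # xs') ! i, (a # xs') ! Suc i) \<in> R" if "Suc i < length (a # xs')" for i
      using rtrancl_path_nth(1)[OF path] that by simp
  qed (use \<open>distinct (a # xs')\<close> in simp_all)
qed

lemma directed_cycle_of_trancl: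
  assumes "(x, x) \<in> A\<^sup>+"
  shows "\<exists>cs. distinct cs \<and> cs \<noteq> [] \<and> (\<forall>i<length cs. (cs ! i, cs ! ((i + 1) mod length cs)) \<in> A)"
proof -
  obtain y where y: "(x, y) \<in> A" "(y, x) \<in> A\<^sup>*"
    using assms by (meson tranclD)
  obtain ps where ps: "distinct ps" "ps \<noteq> []" "hd ps = y" "last ps = x"
    and path: "\<And>i. Suc i < length ps \<Longrightarrow> (ps ! i, ps ! Suc i) \<in> A"
    using distinct_path[OF y(2)] by blast
  have "(ps ! i, ps ! ((i + 1) mod length ps)) \<in> A" if "i < length ps" for i
  proof (cases "Suc i < length ps")
    case True
    then show ?thesis using path by simp
  next
    case False
    then have "i = length ps - 1" using that by simp
    then show ?thesis
      using ps(2-4) y(1) that by (simp add: last_conv_nth hd_conv_nth)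
  qed
  then show ?thesis
    using ps(1,2) by blast
qed

lemma is_cycleI:
  assumes "ecgraph V E" and "F \<subseteq> E" and "distinct cs" and "3 \<le> length cs"
    and "\<And>i. i < length cs \<Longrightarrow> {cs ! i, cs ! ((i + 1) mod length cs)} \<in> F"
  shows "is_cycle V F cs"
proof -
  have "set cs \<subseteq> V"
  proof
    fix v assume "v \<in> set cs"
    then obtain i where i: "i < length cs" "cs ! i = v"
      by (auto simp: in_set_conv_nth)
    have "{cs ! i, cs ! ((i + 1) mod length cs)} \<in> E"
      using assms(2) assms(5)[OF i(1)] by blast
    then show "v \<in> V"
      using edge_endpoints[OF assms(1)] i(2) by blast
  qed
  then show ?thesis
    unfolding is_cycle_def using assms(3-5) by blast
qed

lemma directed_cycle_is_cycle:
  assumes "ecgraph V E" and "arcs_on E A" and "\<forall>z. proper_at col A z"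
    and "distinct cs" and "cs \<noteq> []"
    and arc: "\<And>i. i < length cs \<Longrightarrow> (cs ! i, cs ! ((i + 1) mod length cs)) \<in> A"
  shows "is_cycle V E cs"
proof -
  let ?n = "length cs"
  have edge: "{cs ! i, cs ! ((i + 1) mod ?n)} \<in> E" if "i < ?n" for i
    using arc[OF that] assms(2) unfolding arcs_on_def by blast
  have "?n \<noteq> 1"
  proof
    assume "?n = 1"
    then have "{cs ! 0, cs ! 0} \<in> E"
      using edge[of 0] by simp
    then show False
      using edge_endpoints[OF assms(1)] by blast
  qed
  moreover have "?n \<noteq> 2"
  proof
    assume "?n = 2"
    then have "(cs ! 0, cs ! 1) \<in> A" "(cs ! 1, cs ! 0) \<in> A"
      using arc[of 0] arc[of 1] by simp_all
    then show False
      using antiparallel_not_proper_at[of "cs ! 0" "cs ! 1" A col] assms(3) by blast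
  qed
  moreover have "?n \<noteq> 0"
    using assms(5) by simp
  ultimately have "3 \<le> ?n"
    by linarith
  then show ?thesis
    using is_cycleI[OF assms(1) order_refl assms(4)] edge by blast
qed

lemma directed_cycle_not_mono:
  assumes "proper_at col A (cs ! i)" and "i < length cs"
    and arc: "\<And>i. i < length cs \<Longrightarrow> (cs ! i, cs ! ((i + 1) mod length cs)) \<in> A"
  shows "\<not> cycle_mono col cs i"
proof -
  let ?n = "length cs"
  define p where "p = (i + ?n - 1) mod ?n"
  have "0 < ?n"
    using assms(2) by linarith
  then have "p < ?n" "(p + 1) mod ?n = i"
    using cyclic_next_prev[OF assms(2)] unfolding p_def by auto
  then have "(cs ! p, cs ! i) \<in> A" "(cs ! i, cs ! ((i + 1) mod ?n)) \<in> A"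
    using arc assms(2) by metis+
  then have "col {cs ! i, cs ! p} \<noteq> col {cs ! i, cs ! ((i + 1) mod ?n)}"
    by (rule proper_atD(3)[OF assms(1)])
  then show ?thesis
    unfolding cycle_mono_def Let_def p_def by (simp add: insert_commute)
qed

lemma acyclic_under_cond3:
  assumes "ecgraph V E" and "cond3 V E col" and "arcs_on E A" and "\<forall>z. proper_at col A z"
  shows "acyclic A"
  unfolding acyclic_def
proof (intro allI notI)
  fix x assume "(x, x) \<in> A\<^sup>+"
  then obtain cs where cs: "distinct cs" "cs \<noteq> []"
    and arcs: "\<forall>i<length cs. (cs ! i, cs ! ((i + 1) mod length cs)) \<in> A"
    by (blast dest: directed_cycle_of_trancl)
  have "is_cycle V E cs"
    using directed_cycle_is_cycle[OF assms(1,3,4) cs] arcs by blast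
  then have "0 < num_mono col cs"
    using assms(2) unfolding cond3_def by blast
  moreover have "{i. i < length cs \<and> cycle_mono col cs i} = {}"
    using directed_cycle_not_mono assms(4) arcs by blast
  ultimately show False
    unfolding num_mono_def by simp
qed

section \<open>Existence of a properly coloured orientation under condition (3)\<close>

lemma finite_edges:
  assumes "ecgraph V E"
  shows "finite E"
proof -
  have "E \<subseteq> Pow V" "finite V"
    using assms unfolding ecgraph_def by auto
  then show ?thesis
    by (meson finite_Pow_iff finite_subset)
qed

lemma is_cycle_mono: "is_cycle V F cs \<Longrightarrow> F \<subseteq> E \<Longrightarrow> is_cycle V E cs"
  unfolding is_cycle_def by blast

lemma cycle_through_new_edge:
  assumes "ecgraph V E" and "F \<subseteq> E" and "{u, v} \<in> E" and "{u, v} \<notin> F"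
    and "(u, v) \<in> (adjrel F)\<^sup>*"
  obtains ps where "is_cycle V (insert {u, v} F) ps" and "ps ! 0 = u" and "ps ! (length ps - 1) = v"
proof -
  obtain ps where ps: "distinct ps" "ps \<noteq> []" "hd ps = u" "last ps = v"
    and path: "\<And>i. Suc i < length ps \<Longrightarrow> {ps ! i, ps ! Suc i} \<in> F"
    using distinct_path[OF assms(5)] by auto
  let ?n = "length ps"
  have first: "ps ! 0 = u" and last: "ps ! (?n - 1) = v"
    using ps(2-4) by (simp_all add: hd_conv_nth last_conv_nth)
  have "u \<noteq> v"
    using edge_endpoints[OF assms(1,3)] by blast
  then have "?n \<noteq> 1"
    using first last by auto
  moreover have "?n \<noteq> 2"
    using path[of 0] first last assms(4) by (auto simp: numeral_2_eq_2)
  moreover have "?n \<noteq> 0"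
    using ps(2) by simp
  ultimately have n: "3 \<le> ?n"
    by linarith
  have edge: "{ps ! i, ps ! ((i + 1) mod ?n)} \<in> insert {u, v} F" if "i < ?n" for i
  proof (cases "Suc i < ?n")
    case True
    then show ?thesis using path by simp
  next
    case False
    then have "Suc i = ?n"
      using that by simp
    then have "i = ?n - 1" "(i + 1) mod ?n = 0"
      by auto
    then show ?thesis
      using first last by (simp add: insert_commute)
  qed
  have "is_cycle V (insert {u, v} F) ps"
    using is_cycleI[OF assms(1) _ ps(1) n edge] assms(2,3) by simp
  then show ?thesis
    by (rule that[OF _ first last])
qed

lemma out_or_in_colour_under_cond3:
  assumes "ecgraph V E" and "cond3 V E col" and "F \<subseteq> E" and "pc_orientation F col A"
    and "{x, y} \<in> E"
  shows "out_colour col A x (col {x, y}) \<or> in_colour col A x (col {x, y})"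
proof (rule out_or_in_colour)
  show "proper_at col A x" "arcs_on E A"
    using assms(3,4) unfolding pc_orientation_def arcs_on_def by blast+
  show "card (colors_at E col x) \<le> 2"
    using assms(2) edge_endpoints[OF assms(1,5)] unfolding cond3_def by blast
qed (use assms finite_edges in blast)+

lemma cyclic_indices_at_last:
  assumes "3 \<le> (n :: nat)"
  shows "(n - 1 + n - 1) mod n = n - 2" and "(n - 1 + 1) mod n = 0" and "Suc (n - 2) mod n = n - 1"
proof -
  show "(n - 1 + n - 1) mod n = n - 2"
    using cyclic_prev[of "n - 1" n] assms by simp
  have "n - 1 + 1 = n" "Suc (n - 2) = n - 1"
    using assms by simp_all
  then show "(n - 1 + 1) mod n = 0" "Suc (n - 2) mod n = n - 1"
    using assms by simp_all
qed

lemma mono_iff_turn_at_closing_vertex: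
  assumes "ecgraph V E" and "cond3 V E col" and "F \<subseteq> E" and "{u, v} \<in> E"
    and "pc_orientation F col A" and "out_colour col A u (col {u, v})"
    and cycle: "is_cycle V (insert {u, v} F) ps" and first: "ps ! 0 = u" and last: "ps ! (length ps - 1) = v"
  shows "cycle_mono col ps (length ps - 1) \<longleftrightarrow> turn (insert (u, v) A) ps (length ps - 1)"
proof -
  let ?n = "length ps"
  let ?A = "insert (u, v) A"
  have A: "covers F A" "\<And>z. proper_at col A z"
    using assms(5) unfolding pc_orientation_def by blast+
  have uv: "u \<noteq> v"
    using edge_endpoints[OF assms(1,4)] by blast
  have ps: "distinct ps" "0 < ?n"
    using cycle unfolding is_cycle_def by auto
  have covers: "covers (insert {u, v} F) ?A"
    using A(1) unfolding covers_def by (auto simp: doubleton_eq_iff)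
  have proper: "proper_at col ?A (ps ! i)" if "i < ?n" "i \<noteq> ?n - 1" for i
  proof (cases "i = 0")
    case True
    then show ?thesis
      using proper_at_insert_tail[OF A(2) assms(6) uv] first by simp
  next
    case False
    have "ps ! i \<noteq> u" "ps ! i \<noteq> v"
      using False that ps by (simp_all add: first[symmetric] last[symmetric] nth_eq_iff_index_eq)
    then show ?thesis
      using proper_at_insert_other[of "ps ! i" u v col A] A(2) by blast
  qed
  have "is_cycle V E ps"
    using is_cycle_mono[OF cycle] assms(3,4) by simp
  then have even: "even (num_mono col ps)"
    using assms(2) unfolding cond3_def by blast
  have "cycle_mono col ps i \<longleftrightarrow> turn ?A ps i" if "i < ?n" "i \<noteq> ?n - 1" for i
    by (rule cycle_mono_iff_turn[OF cycle covers that(1) proper[OF that]])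
  then show ?thesis
    by (rule cycle_mono_iff_turn_by_parity) (use ps(2) even in simp_all)
qed

lemma in_colour_across_new_edge:
  assumes "ecgraph V E" and "cond3 V E col" and "F \<subseteq> E" and "{u, v} \<in> E" and "{u, v} \<notin> F"
    and "pc_orientation F col A" and "(u, v) \<in> (adjrel F)\<^sup>*"
    and "out_colour col A u (col {u, v})"
  shows "in_colour col A v (col {u, v})"
proof -
  define c where "c = col {u, v}"
  have A: "arcs_on F A" "covers F A" "\<And>z. proper_at col A z"
    using assms(6) unfolding pc_orientation_def by blast+
  obtain ps where cycle: "is_cycle V (insert {u, v} F) ps"
    and first: "ps ! 0 = u" and last: "ps ! (length ps - 1) = v"
    using cycle_through_new_edge[OF assms(1,3,4,5,7)] by blast
  let ?n = "length ps"
  have n: "3 \<le> ?n" and ps: "distinct ps"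
    using cycle unfolding is_cycle_def by blast+
  note indices = cyclic_indices_at_last[OF n]
  \<comment> \<open>At v the cycle arrives from p and leaves against the new arc (u, v), so the
    parity of the cycle ties the colour of pv to its direction.\<close>
  define p where "p = ps ! (?n - 2)"
  have "0 < ?n"
    using n by linarith
  then have "p \<noteq> u" "p \<noteq> v"
    using ps n unfolding p_def by (simp_all add: first[symmetric] last[symmetric] nth_eq_iff_index_eq)
  have "(v, u) \<notin> A"
    using A(1) assms(5) unfolding arcs_on_def by (metis insert_commute)
  then have key: "col {p, v} = c \<longleftrightarrow> (p, v) \<in> A"
    using mono_iff_turn_at_closing_vertex[OF assms(1-4,6,8) cycle first last] last first \<open>p \<noteq> u\<close>
      edge_endpoints[OF assms(1,4)]
    unfolding cycle_mono_def turn_def forward_step_def Let_def indices(1,2) c_def p_def[symmetric]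
    by (auto simp: insert_commute indices(3))
  have "?n - 2 < ?n"
    using n by simp
  then have "{ps ! (?n - 2), ps ! (Suc (?n - 2) mod ?n)} \<in> insert {u, v} F"
    using cycle unfolding is_cycle_def by simp
  then have "{p, v} \<in> insert {u, v} F"
    using indices(3) last unfolding p_def by simp
  moreover have "{p, v} \<noteq> {u, v}"
    using \<open>p \<noteq> u\<close> \<open>p \<noteq> v\<close> by (auto simp: doubleton_eq_iff)
  ultimately have "(p, v) \<in> A \<or> (v, p) \<in> A"
    using A(2) unfolding covers_def by blast
  then have "\<not> out_colour col A v c"
    using key antiparallel_not_proper_at[of v p A col] A(3)
    unfolding out_colour_def by (metis insert_commute)
  moreover have "out_colour col A v c \<or> in_colour col A v c"
    using out_or_in_colour_under_cond3[OF assms(1-3,6), of v u] assms(4)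
    unfolding c_def by (simp add: insert_commute)
  ultimately show ?thesis
    unfolding c_def by blast
qed

lemma reverse_other_component:
  assumes "pc_orientation F col A" and "(u, v) \<notin> (adjrel F)\<^sup>*"
    and "out_colour col A u c" and "out_colour col A v c"
  shows "\<exists>B. pc_orientation F col B \<and> out_colour col B u c \<and> in_colour col B v c"
proof -
  define \<sigma> where "\<sigma> x \<longleftrightarrow> (u, x) \<in> (adjrel F)\<^sup>*" for x
  have \<sigma>: "\<forall>x y. {x, y} \<in> F \<longrightarrow> \<sigma> x = \<sigma> y"
  proof (intro allI impI)
    fix x y assume "{x, y} \<in> F"
    then show "\<sigma> x = \<sigma> y"
      unfolding \<sigma>_def by (rule rtrancl_adjrel_edge)
  qed
  then have \<sigma>_arcs: "\<forall>x y. (x, y) \<in> A \<longrightarrow> \<sigma> x = \<sigma> y"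
    using assms(1) unfolding pc_orientation_def arcs_on_def by blast
  have "\<sigma> u" "\<not> \<sigma> v"
    using assms(2) unfolding \<sigma>_def by auto
  then have "out_colour col (flip \<sigma> A) u c" "in_colour col (flip \<sigma> A) v c"
    using out_colour_flip[OF \<sigma>_arcs, of col u] in_colour_flip[OF \<sigma>_arcs, of col v] assms(3,4)
    by simp_all
  with pc_orientation_flip[OF assms(1) \<sigma>] show ?thesis
    by blast
qed

lemma extend_pc_orientation_from_out_colour:
  assumes "ecgraph V E" and "cond3 V E col" and "F \<subseteq> E" and "{u, v} \<in> E" and "{u, v} \<notin> F"
    and "pc_orientation F col A" and "out_colour col A u (col {u, v})"
  shows "\<exists>A'. pc_orientation (insert {u, v} F) col A'"
proof -
  have uv: "u \<noteq> v"
    using edge_endpoints[OF assms(1,4)] by blast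
  show ?thesis
  proof (cases "(u, v) \<in> (adjrel F)\<^sup>*")
    case True
    have "pc_orientation (insert {u, v} F) col (insert (u, v) A)"
      by (rule pc_orientation_insert[OF assms(6,7) in_colour_across_new_edge[OF assms(1-6) True assms(7)] uv])
    then show ?thesis ..
  next
    case False
    have "out_colour col A v (col {u, v}) \<or> in_colour col A v (col {u, v})"
      using out_or_in_colour_under_cond3[OF assms(1-3,6), of v u] assms(4)
      by (simp add: insert_commute)
    then show ?thesis
    proof
      assume "in_colour col A v (col {u, v})"
      then have "pc_orientation (insert {u, v} F) col (insert (u, v) A)"
        by (rule pc_orientation_insert[OF assms(6,7) _ uv])
      then show ?thesis ..
    next
      assume "out_colour col A v (col {u, v})"
      then obtain B where "pc_orientation F col B" "out_colour col B u (col {u, v})"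
        "in_colour col B v (col {u, v})"
        using reverse_other_component[OF assms(6) False assms(7)] by blast
      then have "pc_orientation (insert {u, v} F) col (insert (u, v) B)"
        by (rule pc_orientation_insert[OF _ _ _ uv])
      then show ?thesis ..
    qed
  qed
qed

lemma extend_pc_orientation:
  assumes "ecgraph V E" and "cond3 V E col" and "F \<subseteq> E" and "{u, v} \<in> E" and "{u, v} \<notin> F"
    and "pc_orientation F col A"
  shows "\<exists>A'. pc_orientation (insert {u, v} F) col A'"
proof -
  have "out_colour col A u (col {u, v}) \<or> in_colour col A u (col {u, v})"
    using out_or_in_colour_under_cond3[OF assms(1-3,6,4)] .
  then show ?thesis
  proof
    assume "out_colour col A u (col {u, v})"
    then show ?thesis
      by (rule extend_pc_orientation_from_out_colour[OF assms])
  next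
    assume "in_colour col A u (col {u, v})"
    then have "out_colour col (A\<inverse>) u (col {u, v})"
      unfolding in_colour_def .
    then show ?thesis
      by (rule extend_pc_orientation_from_out_colour[OF assms(1-5) pc_orientation_converse[OF assms(6)]])
  qed
qed

lemma pc_orientation_exists:
  assumes "ecgraph V E" and "cond3 V E col"
  shows "\<exists>A. pc_orientation E col A"
proof -
  have "finite E" "E \<subseteq> E"
    using finite_edges[OF assms(1)] by simp_all
  then show ?thesis
  proof (induction E rule: finite_subset_induct')
    case empty
    show ?case
      unfolding pc_orientation_def arcs_on_def covers_def proper_at_def by blast
  next
    case (insert e F)
    then obtain A where "pc_orientation F col A" by blast
    moreover obtain u v where "e = {u, v}"
      using assms(1) insert.hyps(2) unfolding ecgraph_def by blast
    ultimately show ?case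
      using extend_pc_orientation[OF assms insert.hyps(3)] insert.hyps(2,4) by blast
  qed
qed

section \<open>The orientation procedure\<close>

definition marked_state :: "'a set \<Rightarrow> 'a set set \<Rightarrow> 'a set \<Rightarrow> ('a \<times> 'a) set \<Rightarrow> bool" where
  "marked_state V E M A \<longleftrightarrow> M \<subseteq> V \<and> arcs_on E A \<and> (\<forall>x y. (x, y) \<in> A \<longrightarrow> x \<in> M \<or> y \<in> M)
     \<and> (\<forall>x\<in>M. \<forall>w. {x, w} \<in> E \<longrightarrow> (x, w) \<in> A \<or> (w, x) \<in> A)"

lemma orient_at_iff:
  "(p, q) \<in> orient_at E col y a out A \<longleftrightarrow>
     ((p, q) \<in> A \<and> p \<noteq> y \<and> q \<noteq> y) \<or> (p = y \<and> {y, q} \<in> E \<and> (col {y, q} = a) = out)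
     \<or> (q = y \<and> {y, p} \<in> E \<and> (col {y, p} = a) \<noteq> out)"
  unfolding orient_at_def by auto

lemma marked_state_orient_at:
  assumes "marked_state V E M A" and "y \<in> V"
  shows "marked_state V E (insert y M) (orient_at E col y a out A)"
proof -
  let ?A = "orient_at E col y a out A"
  have A: "M \<subseteq> V" "arcs_on E A" "\<And>x z. (x, z) \<in> A \<Longrightarrow> x \<in> M \<or> z \<in> M"
    "\<And>x w. x \<in> M \<Longrightarrow> {x, w} \<in> E \<Longrightarrow> (x, w) \<in> A \<or> (w, x) \<in> A"
    using assms(1) unfolding marked_state_def by blast+
  have "arcs_on E ?A"
    using A(2) unfolding arcs_on_def orient_at_iff by (metis insert_commute)
  moreover have "\<forall>x z. (x, z) \<in> ?A \<longrightarrow> x \<in> insert y M \<or> z \<in> insert y M"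
    unfolding orient_at_iff using A(3) by blast
  moreover have "(x, w) \<in> ?A \<or> (w, x) \<in> ?A" if "x \<in> insert y M" "{x, w} \<in> E" for x w
  proof (cases "x = y \<or> w = y")
    case True
    then show ?thesis
      using that(2) unfolding orient_at_iff by (auto simp: insert_commute)
  next
    case False
    then show ?thesis
      using A(4)[of x w] that unfolding orient_at_iff by auto
  qed
  ultimately show ?thesis
    unfolding marked_state_def using A(1) assms(2) by blast
qed

lemma orient_reach_marked_state:
  assumes "orient_reach V E col S"
  shows "marked_state V E (fst S) (snd S)"
  using assms
proof (induction rule: orient_reach.induct)
  case init
  show ?case
    unfolding marked_state_def arcs_on_def by simp
qed (simp_all add: marked_state_orient_at)

lemma orient_at_subset:
  assumes "covers E F" and "A \<subseteq> F"
    and "\<And>w. {y, w} \<in> E \<Longrightarrow> (y, w) \<in> F \<longleftrightarrow> (col {y, w} = a) = out"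
  shows "orient_at E col y a out A \<subseteq> F"
proof (clarify)
  fix p q assume "(p, q) \<in> orient_at E col y a out A"
  then show "(p, q) \<in> F"
    unfolding orient_at_iff using assms unfolding covers_def by blast
qed

lemma pc_orientation_direction:
  assumes "pc_orientation E col F" and "{y, w} \<in> E" and "(y, z) \<in> F \<or> (z, y) \<in> F"
  shows "(y, w) \<in> F \<longleftrightarrow> (col {y, w} = col {y, z}) = ((y, z) \<in> F)"
proof -
  have "proper_at col F y" "(y, w) \<in> F \<or> (w, y) \<in> F"
    using assms(1,2) unfolding pc_orientation_def covers_def by blast+
  from same_direction_iff_same_colour[OF this assms(3)] show ?thesis
    by auto
qed

lemma pc_orientation_antiparallel:
  "pc_orientation E col F \<Longrightarrow> (x, y) \<in> F \<Longrightarrow> (y, x) \<notin> F"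
  unfolding pc_orientation_def using antiparallel_not_proper_at[of x y F col] by blast

lemma orient_at_along_arc_subset:
  assumes "pc_orientation E col F" and "A \<subseteq> F" and "(y, z) \<in> F \<or> (z, y) \<in> F"
  shows "orient_at E col y (col {y, z}) ((y, z) \<in> F) A \<subseteq> F"
proof (rule orient_at_subset[OF _ assms(2)])
  show "covers E F"
    using assms(1) unfolding pc_orientation_def by blast
  show "(y, w) \<in> F \<longleftrightarrow> (col {y, w} = col {y, z}) = ((y, z) \<in> F)" if "{y, w} \<in> E" for w
    by (rule pc_orientation_direction[OF assms(1) that assms(3)])
qed

lemma direction_at_vertex:
  assumes "pc_orientation E col O'" and "{x, w0} \<in> E" and "{x, w} \<in> E"
  shows "(if (x, w0) \<in> O' \<longleftrightarrow> out then (x, w) \<in> O' else (w, x) \<in> O')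
    \<longleftrightarrow> (col {x, w} = col {x, w0}) = out"
proof -
  have "(x, w0) \<in> O' \<or> (w0, x) \<in> O'" "(x, w) \<in> O' \<or> (w, x) \<in> O'"
    using assms unfolding pc_orientation_def covers_def by blast+
  then show ?thesis
    using pc_orientation_direction[OF assms(1,3)] pc_orientation_antiparallel[OF assms(1), of x w]
    by auto
qed

text \<open>
  A start step at x is absorbed by re-choosing \<sigma> on the component of x, which is still unmarked.
\<close>

lemma reorient_component:
  assumes "ecgraph V E" and "pc_orientation E col O'" and "\<forall>p q. {p, q} \<in> E \<longrightarrow> \<sigma> p = \<sigma> q" and "A \<subseteq> flip \<sigma> O'"
    and "\<forall>p q. (p, q) \<in> A \<longrightarrow> (x, p) \<notin> (adjrel E)\<^sup>*"
    and "a \<in> colors_at E col x \<or> colors_at E col x = {}"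
  shows "\<exists>\<sigma>'. (\<forall>p q. {p, q} \<in> E \<longrightarrow> \<sigma>' p = \<sigma>' q) \<and> A \<subseteq> flip \<sigma>' O' \<and>
    (\<forall>w. {x, w} \<in> E \<longrightarrow> ((x, w) \<in> flip \<sigma>' O' \<longleftrightarrow> (col {x, w} = a) = out))"
proof -
  define R where "R = {z. (x, z) \<in> (adjrel E)\<^sup>*}"
  define w0 where "w0 = (SOME w. {x, w} \<in> E \<and> col {x, w} = a)"
  define s where "s \<longleftrightarrow> ((x, w0) \<in> O' \<longleftrightarrow> out)"
  define \<sigma>' where "\<sigma>' z \<longleftrightarrow> (if z \<in> R then s else \<sigma> z)" for z
  have R: "{p, q} \<in> E \<Longrightarrow> p \<in> R \<longleftrightarrow> q \<in> R" for p q
    unfolding R_def using rtrancl_adjrel_edge by simp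
  have "\<forall>p q. {p, q} \<in> E \<longrightarrow> \<sigma>' p = \<sigma>' q"
    unfolding \<sigma>'_def using assms(3) R by auto
  moreover have "A \<subseteq> flip \<sigma>' O'"
  proof clarify
    fix p q assume "(p, q) \<in> A"
    then have "(p, q) \<in> flip \<sigma> O'" "p \<notin> R"
      using assms(4,5) unfolding R_def by auto
    then show "(p, q) \<in> flip \<sigma>' O'"
      unfolding flip_def \<sigma>'_def by simp
  qed
  moreover have "(x, w) \<in> flip \<sigma>' O' \<longleftrightarrow> (col {x, w} = a) = out" if w: "{x, w} \<in> E" for w
  proof -
    have "a \<in> colors_at E col x"
      using assms(6) colour_in_colors_at[OF w] by blast
    then have "\<exists>w. {x, w} \<in> E \<and> col {x, w} = a"
      unfolding colors_at_def using edge_at[OF assms(1)] by blast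
    then have w0: "{x, w0} \<in> E" "col {x, w0} = a"
      unfolding w0_def by (metis (mono_tags, lifting) someI_ex)+
    have "x \<in> R"
      unfolding R_def by simp
    then have "(x, w) \<in> flip \<sigma>' O' \<longleftrightarrow> (if s then (x, w) \<in> O' else (w, x) \<in> O')"
      unfolding flip_def \<sigma>'_def by simp
    then show ?thesis
      using direction_at_vertex[OF assms(2) w0(1) w, of out] w0(2) unfolding s_def by simp
  qed
  ultimately show ?thesis
    by blast
qed

lemma start_step_within_flip:
  assumes "ecgraph V E" and "pc_orientation E col O'"
    and \<sigma>: "\<forall>x y. {x, y} \<in> E \<longrightarrow> \<sigma> x = \<sigma> y" "A \<subseteq> flip \<sigma> O'"
    and state: "marked_state V E M A" and "\<forall>v. (x, v) \<in> (adjrel E)\<^sup>* \<longrightarrow> v \<notin> M"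
    and "a \<in> colors_at E col x \<or> colors_at E col x = {}"
  shows "\<exists>\<sigma>'. (\<forall>x y. {x, y} \<in> E \<longrightarrow> \<sigma>' x = \<sigma>' y) \<and> orient_at E col x a out A \<subseteq> flip \<sigma>' O'"
proof -
  have "(x, p) \<notin> (adjrel E)\<^sup>*" if "(p, q) \<in> A" for p q
  proof
    assume px: "(x, p) \<in> (adjrel E)\<^sup>*"
    have "{p, q} \<in> E" "p \<in> M \<or> q \<in> M"
      using state that unfolding marked_state_def arcs_on_def by blast+
    then show False
      using px assms(6) rtrancl_adjrel_edge[of p q E x] by blast
  qed
  then obtain \<sigma>' where \<sigma>': "\<forall>x y. {x, y} \<in> E \<longrightarrow> \<sigma>' x = \<sigma>' y" "A \<subseteq> flip \<sigma>' O'"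
    and at_x: "\<forall>w. {x, w} \<in> E \<longrightarrow> ((x, w) \<in> flip \<sigma>' O' \<longleftrightarrow> (col {x, w} = a) = out)"
    using reorient_component[OF assms(1,2) \<sigma> _ assms(7), of out] by blast
  have "covers E (flip \<sigma>' O')"
    using pc_orientation_flip[OF assms(2) \<sigma>'(1)] unfolding pc_orientation_def by blast
  then have "orient_at E col x a out A \<subseteq> flip \<sigma>' O'"
    using \<sigma>'(2) at_x by (intro orient_at_subset) auto
  then show ?thesis
    using \<sigma>'(1) by blast
qed

lemma run_within_flip:
  assumes "ecgraph V E" and "pc_orientation E col O'" and "orient_reach V E col S"
  shows "\<exists>\<sigma>. (\<forall>x y. {x, y} \<in> E \<longrightarrow> \<sigma> x = \<sigma> y) \<and> snd S \<subseteq> flip \<sigma> O'"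
  using assms(3)
proof (induction rule: orient_reach.induct)
  case init
  show ?case by (intro exI[of _ "\<lambda>_. True"]) simp
next
  case (start M Arcs x a out)
  obtain \<sigma> where "\<forall>x y. {x, y} \<in> E \<longrightarrow> \<sigma> x = \<sigma> y" "Arcs \<subseteq> flip \<sigma> O'"
    using start.IH by auto
  then show ?case
    using start_step_within_flip[OF assms(1,2) _ _ orient_reach_marked_state[OF start.hyps(1)]]
      start.hyps(5,6) by simp
next
  case (prop_in M Arcs y z)
  obtain \<sigma> where \<sigma>: "\<forall>x y. {x, y} \<in> E \<longrightarrow> \<sigma> x = \<sigma> y" "Arcs \<subseteq> flip \<sigma> O'"
    using prop_in.IH by auto
  let ?F = "flip \<sigma> O'"
  have F: "pc_orientation E col ?F"
    by (rule pc_orientation_flip[OF assms(2) \<sigma>(1)])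
  have "(z, y) \<in> ?F"
    using prop_in.hyps(5) \<sigma>(2) by blast
  then have "orient_at E col y (col {y, z}) ((y, z) \<in> ?F) Arcs \<subseteq> ?F"
    using orient_at_along_arc_subset[OF F \<sigma>(2)] by blast
  moreover have "(y, z) \<notin> ?F"
    by (rule pc_orientation_antiparallel[OF F \<open>(z, y) \<in> ?F\<close>])
  ultimately show ?case
    using \<sigma>(1) by (auto simp: insert_commute)
next
  case (prop_out M Arcs y z)
  obtain \<sigma> where \<sigma>: "\<forall>x y. {x, y} \<in> E \<longrightarrow> \<sigma> x = \<sigma> y" "Arcs \<subseteq> flip \<sigma> O'"
    using prop_out.IH by auto
  let ?F = "flip \<sigma> O'"
  have F: "pc_orientation E col ?F"
    by (rule pc_orientation_flip[OF assms(2) \<sigma>(1)])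
  have "(y, z) \<in> ?F"
    using prop_out.hyps(5) \<sigma>(2) by blast
  then have "orient_at E col y (col {y, z}) ((y, z) \<in> ?F) Arcs \<subseteq> ?F"
    using orient_at_along_arc_subset[OF F \<sigma>(2)] by blast
  then show ?case
    using \<sigma>(1) \<open>(y, z) \<in> ?F\<close> by auto
qed

lemma proper_at_subset: "proper_at col B z \<Longrightarrow> A \<subseteq> B \<Longrightarrow> proper_at col A z"
  unfolding proper_at_def by blast

lemma runs_conflict_free:
  assumes "ecgraph V E" and "pc_orientation E col O'" and "orient_reach V E col (M, A)"
  shows "\<not> conflict col A"
proof -
  obtain \<sigma> where "\<forall>x y. {x, y} \<in> E \<longrightarrow> \<sigma> x = \<sigma> y" and sub: "A \<subseteq> flip \<sigma> O'"
    using run_within_flip[OF assms] by auto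
  then have "proper_at col (flip \<sigma> O') z" for z
    using pc_orientation_flip[OF assms(2)] unfolding pc_orientation_def by blast
  then show ?thesis
    using proper_at_subset[OF _ sub] unfolding conflict_iff_not_proper_at by blast
qed

lemma rtrancl_crossing_arc:
  assumes "(x, v) \<in> R\<^sup>*" and "x \<notin> M" and "v \<in> M"
  shows "\<exists>y m. y \<notin> M \<and> m \<in> M \<and> (y, m) \<in> R"
  using assms
proof (induction rule: rtrancl_induct)
  case base
  then show ?case by simp
next
  case (step b c)
  show ?case
  proof (cases "b \<in> M")
    case True
    then show ?thesis using step.IH step.prems(1) by blast
  next
    case False
    then show ?thesis using step.hyps(2) step.prems(2) by blast
  qed
qed

lemma orient_reach_mark_one_more:
  assumes "ecgraph V E" and "orient_reach V E col (M, A)" and "\<not> conflict col A"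
    and "x \<in> V" and "x \<notin> M"
  shows "\<exists>y A'. y \<in> V - M \<and> orient_reach V E col (insert y M, A')"
proof (cases "\<exists>v. (x, v) \<in> (adjrel E)\<^sup>* \<and> v \<in> M")
  case True
  then obtain v where "(x, v) \<in> (adjrel E)\<^sup>*" "v \<in> M"
    by blast
  then obtain y m where y: "y \<notin> M" "m \<in> M" "(y, m) \<in> adjrel E"
    using rtrancl_crossing_arc[OF _ assms(5)] by blast
  then have "y \<in> V"
    using edge_endpoints[OF assms(1)] by simp
  have "(m, y) \<in> A \<or> (y, m) \<in> A"
    using orient_reach_marked_state[OF assms(2)] y unfolding marked_state_def
    by (simp add: insert_commute)
  then show ?thesis
  proof
    assume "(m, y) \<in> A"
    from orient_reach.prop_in[OF assms(2,3) \<open>y \<in> V\<close> y(1) this] show ?thesis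
      using \<open>y \<in> V\<close> y(1) by blast
  next
    assume "(y, m) \<in> A"
    from orient_reach.prop_out[OF assms(2,3) \<open>y \<in> V\<close> y(1) this] show ?thesis
      using \<open>y \<in> V\<close> y(1) by blast
  qed
next
  case False
  obtain a where "a \<in> colors_at E col x \<or> colors_at E col x = {}"
    by blast
  then have "orient_reach V E col (insert x M, orient_at E col x a True A)"
    using False by (intro orient_reach.start[OF assms(2-5)]) auto
  then show ?thesis
    using assms(4,5) by blast
qed

lemma run_completes:
  assumes "ecgraph V E" and "\<forall>M A. orient_reach V E col (M, A) \<longrightarrow> \<not> conflict col A"
  shows "\<exists>A. orient_reach V E col (V, A) \<and> all_oriented E A"
proof -
  have "finite V"
    using assms(1) unfolding ecgraph_def by blast
  have "\<exists>A'. orient_reach V E col (V, A')" if "orient_reach V E col (M, A)" for M A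
    using that
  proof (induction "card (V - M)" arbitrary: M A rule: less_induct)
    case less
    have "M \<subseteq> V"
      using orient_reach_marked_state[OF less.prems] unfolding marked_state_def by simp
    show ?case
    proof (cases "M = V")
      case False
      then obtain x where "x \<in> V" "x \<notin> M"
        using \<open>M \<subseteq> V\<close> by blast
      then obtain y A' where y: "y \<in> V - M" "orient_reach V E col (insert y M, A')"
        using orient_reach_mark_one_more[OF assms(1) less.prems] assms(2) less.prems by blast
      have "card (V - insert y M) < card (V - M)"
        using y(1) \<open>finite V\<close> by (metis Diff_insert card_Diff1_less finite_Diff)
      then show ?thesis
        using less.hyps y(2) by blast
    qed (use less.prems in blast)
  qed
  then obtain A where run: "orient_reach V E col (V, A)"
    using orient_reach.init by blast
  have "all_oriented E A"
    unfolding all_oriented_def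
  proof
    fix e assume "e \<in> E"
    then obtain u w where uw: "e = {u, w}" "u \<in> V"
      using assms(1) unfolding ecgraph_def by blast
    then have "(u, w) \<in> A \<or> (w, u) \<in> A"
      using orient_reach_marked_state[OF run] \<open>e \<in> E\<close> unfolding marked_state_def by simp
    then show "\<exists>u w. e = {u, w} \<and> (u, w) \<in> A"
      using uw(1) by (metis insert_commute)
  qed
  then show ?thesis
    using run by blast
qed

lemma pc_orientation_of_run:
  assumes "orient_reach V E col (M, A)" and "\<not> conflict col A" and "all_oriented E A"
  shows "pc_orientation E col A"
proof -
  have "arcs_on E A"
    using orient_reach_marked_state[OF assms(1)] unfolding marked_state_def by simp
  moreover have "covers E A"
    using assms(3) unfolding all_oriented_def covers_def by (metis doubleton_eq_iff)
  ultimately show ?thesis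
    using assms(2) unfolding pc_orientation_def conflict_iff_not_proper_at by blast
qed

lemma pc_acyclic_type5_iff_cond3:
  assumes "ecgraph V E"
  shows "pc_acyclic_type5 V E col \<longleftrightarrow> cond3 V E col"
proof
  assume "pc_acyclic_type5 V E col"
  then show "cond3 V E col"
    using cond3_of_acyclic_pc_orientation[OF assms]
      pc_acyclic_type5_iff_acyclic_pc_orientation[OF assms] by blast
next
  assume c3: "cond3 V E col"
  then obtain A where "pc_orientation E col A"
    using pc_orientation_exists[OF assms] by blast
  moreover have "acyclic A"
    using acyclic_under_cond3[OF assms c3] calculation unfolding pc_orientation_def by blast
  ultimately show "pc_acyclic_type5 V E col"
    using pc_acyclic_type5_iff_acyclic_pc_orientation[OF assms] by blast
qed

lemma proc_ok_all_of_cond3: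
  assumes "ecgraph V E" and "cond3 V E col"
  shows "proc_ok_all V E col"
proof -
  obtain O' where O': "pc_orientation E col O'"
    using pc_orientation_exists[OF assms] by blast
  have conflict_free: "\<forall>M A. orient_reach V E col (M, A) \<longrightarrow> \<not> conflict col A"
    using runs_conflict_free[OF assms(1) O'] by blast
  have "acyclic A" if "orient_reach V E col (M, A)" and "all_oriented E A" for M A
    using acyclic_under_cond3[OF assms] pc_orientation_of_run[OF that(1) _ that(2)] conflict_free that(1)
    unfolding pc_orientation_def by blast
  then show ?thesis
    unfolding proc_ok_all_def using assms(2) conflict_free run_completes[OF assms(1) conflict_free]
    unfolding cond3_def by blast
qed

lemma pc_acyclic_type5_of_proc_ok_some:
  assumes "ecgraph V E" and "proc_ok_some V E col"
  shows "pc_acyclic_type5 V E col"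
proof -
  obtain M A where "orient_reach V E col (M, A)" "\<not> conflict col A" "all_oriented E A" "acyclic A"
    using assms(2) unfolding proc_ok_some_def by blast
  then show ?thesis
    using pc_orientation_of_run pc_acyclic_type5_iff_acyclic_pc_orientation[OF assms(1)] by blast
qed

theorem theorem5:
  fixes V :: "'a set" and E :: "'a set set" and col :: "'a set \<Rightarrow> 'c"
  assumes "ecgraph V E"
  shows "(pc_acyclic_type5 V E col \<longleftrightarrow> proc_ok_some V E col) \<and>
         (pc_acyclic_type5 V E col \<longleftrightarrow> proc_ok_all V E col) \<and>
         (pc_acyclic_type5 V E col \<longleftrightarrow> cond3 V E col)"
proof -
  have type5_cond3: "pc_acyclic_type5 V E col \<longleftrightarrow> cond3 V E col"
    by (rule pc_acyclic_type5_iff_cond3[OF assms])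
  moreover have "pc_acyclic_type5 V E col \<Longrightarrow> proc_ok_all V E col"
    using proc_ok_all_of_cond3[OF assms] type5_cond3 by blast
  moreover have "proc_ok_all V E col \<Longrightarrow> proc_ok_some V E col"
    unfolding proc_ok_all_def proc_ok_some_def by blast
  moreover have "proc_ok_some V E col \<Longrightarrow> pc_acyclic_type5 V E col"
    by (rule pc_acyclic_type5_of_proc_ok_some[OF assms])
  ultimately show ?thesis
    by blast
qed

end
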